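(* Let $n=2k$ and let $u_1,\ldots,u_k$ be pairwise distinct elements of $\mathbb{F}_{2^n}$ such that $u_iu_j^{2^k}\in\mathbb{F}_{2^k}^*$ for all $1\le i<j\le k$. Let $t$ be a positive integer, let $F_1,\ldots,F_t$ be reduced polynomials in $\mathbb{F}_2[X_1,\ldots,X_k]$, and set $f_i(x)=F_i(\mathrm{Tr}^n_1(u_1x),\ldots,\mathrm{Tr}^n_1(u_kx))$. Then $\widehat H(x)=(x^{2^k+1},f_1(x),\ldots,f_t(x))$ is a vectorial plateaued $(n,k+t)$-function if and only if the $(n,t)$-function $(f_1,\ldots,f_t)$ is vectorial plateaued.
   Context: $\mathrm{Tr}^n_1(x)=\sum_{i=0}^{n-1}x^{2^i}$; $x^{2^k+1}\in\mathbb{F}_{2^k}$. $\widehat H$ is viewed as a map $\mathbb{F}_{2^n}\to\mathbb{F}_{2^k}\times\mathbb{F}_2^t$ with components $\langle(u,v),\widehat H(x)\rangle=\mathrm{Tr}^k_1(ux^{2^k+1})+\sum_i v_if_i(x)$, $(u,v)\ne(0,0)$. A Boolean function $f$ is plateaued if $W_f(a)=\sum_x(-1)^{f(x)+\mathrm{Tr}^n_1(ax)}$ takes values in $\{0,\pm2^s\}$ for some $n/2\le s\le n$; a vectorial function is vectorial plateaued if all its components are plateaued. A reduced polynomial is a multilinear polynomial over $\mathbb{F}_2$. *)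

theory Defs
  imports Main "HOL-Library.Cardinality"
begin

text \<open>The field F_{2^n} is rendered as a finite field type 'a of characteristic 2
  with CARD('a) = 2^n. Elements of F_2 are rendered as bool (True = 1, xor = addition).\<close>

definition Tr :: "nat \<Rightarrow> 'a::field \<Rightarrow> 'a" where
  "Tr m x = (\<Sum>i<m. x ^ (2 ^ i))"

text \<open>Absolute trace Tr^m_1, viewed as an element of F_2 (True iff the trace is 1, i.e. nonzero).\<close>
definition trb :: "nat \<Rightarrow> 'a::field \<Rightarrow> bool" where
  "trb m x = (Tr m x \<noteq> 0)"

definition subfield :: "nat \<Rightarrow> 'a::field set" where
  "subfield m = {x. x ^ (2 ^ m) = x}"

text \<open>Reduced (multilinear) polynomial over F_2 in variables X_0..X_{k-1}:
  a finite set of monomials, each monomial given by the set of its variables.\<close>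
definition reduced_poly :: "nat \<Rightarrow> nat set set \<Rightarrow> bool" where
  "reduced_poly k P \<longleftrightarrow> finite P \<and> (\<forall>S\<in>P. S \<subseteq> {..<k})"

definition eval_rpoly :: "nat set set \<Rightarrow> (nat \<Rightarrow> bool) \<Rightarrow> bool" where
  "eval_rpoly P X = odd (card {S\<in>P. \<forall>j\<in>S. X j})"

definition walsh :: "nat \<Rightarrow> ('a::{field,finite} \<Rightarrow> bool) \<Rightarrow> 'a \<Rightarrow> int" where
  "walsh n f a = (\<Sum>x\<in>UNIV. if f x = trb n (a * x) then 1 else -1)"

definition plateaued :: "nat \<Rightarrow> ('a::{field,finite} \<Rightarrow> bool) \<Rightarrow> bool" where
  "plateaued n f \<longleftrightarrow> (\<exists>s::nat. n \<le> 2 * s \<and> s \<le> n \<and>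
      (\<forall>a. walsh n f a \<in> {0, 2 ^ s, - (2 ^ s)}))"

text \<open>XOR of the f_i(x) with v_i = 1, i < t: the F_2 inner product v . (f_1(x),...,f_t(x)).\<close>
definition vdot :: "nat \<Rightarrow> (nat \<Rightarrow> bool) \<Rightarrow> (nat \<Rightarrow> 'a \<Rightarrow> bool) \<Rightarrow> 'a \<Rightarrow> bool" where
  "vdot t v fs x = odd (card {i. i < t \<and> v i \<and> fs i x})"

definition vplateaued :: "nat \<Rightarrow> nat \<Rightarrow> (nat \<Rightarrow> 'a::{field,finite} \<Rightarrow> bool) \<Rightarrow> bool" where
  "vplateaued n t fs \<longleftrightarrow>
     (\<forall>v. (\<exists>i<t. v i) \<longrightarrow> plateaued n (vdot t v fs))"

text \<open>Components of H(x) = (x^{2^k+1}, f_1(x), ..., f_t(x)) as a map into F_{2^k} x F_2^t: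
  <(u,v), H(x)> = Tr^k_1(u x^{2^k+1}) + sum_i v_i f_i(x).\<close>
definition H_component :: "nat \<Rightarrow> nat \<Rightarrow> (nat \<Rightarrow> 'a::field \<Rightarrow> bool) \<Rightarrow> 'a \<Rightarrow> (nat \<Rightarrow> bool) \<Rightarrow> 'a \<Rightarrow> bool" where
  "H_component k t fs u v x = (trb k (u * x ^ (2 ^ k + 1)) \<noteq> vdot t v fs x)"

definition H_vplateaued :: "nat \<Rightarrow> nat \<Rightarrow> nat \<Rightarrow> (nat \<Rightarrow> 'a::{field,finite} \<Rightarrow> bool) \<Rightarrow> bool" where
  "H_vplateaued n k t fs \<longleftrightarrow>
     (\<forall>u v. u \<in> subfield k \<longrightarrow> (u \<noteq> 0 \<or> (\<exists>i<t. v i)) \<longrightarrow>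
        plateaued n (H_component k t fs u v))"

end

theory Submission
  imports Defs "HOL-Computational_Algebra.Polynomial"
begin

text \<open>Let q = 2^k, K = F_q, and let T(x) = x + x^q and N(x) = x^(q+1) be the relative trace
  and norm of F_{2^n} / K (Tr_rel and Norm_rel below), so that Tr^n_1 = Tr^k_1 \<circ> T. The product
  condition makes every u_j a K-multiple of one w \<noteq> 0, so every f_i(x) is a function of T(wx).
  The components of H with u = 0 are exactly the components of (f_1, ..., f_t). Those with u \<noteq> 0
  are bent: after scaling x by w, write x = s\<zeta> + z with s, z \<in> K and T(\<zeta>) = 1; then T(x) = s
  and N(x) = s^2 N(\<zeta>) + sz + z^2, so in the Walsh sum the inner sum over z is a character sum
  over K that vanishes for all s but one, leaving \<plusminus>2^k.\<close>

section \<open>Fields of characteristic 2\<close>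

lemma char2_add_self:
  assumes "(1::'a::field) + 1 = 0"
  shows "x + x = (0::'a)"
proof -
  have "x + x = x * (1 + 1)"
    by (simp add: distrib_left)
  then show ?thesis
    using assms by simp
qed

lemma char2_uminus:
  assumes "(1::'a::field) + 1 = 0"
  shows "- x = (x::'a)"
  using char2_add_self[OF assms] by (metis minus_unique)

lemma frobenius_add:
  assumes "(1::'a::field) + 1 = 0"
  shows "(x + y) ^ 2 ^ i = x ^ 2 ^ i + (y::'a) ^ 2 ^ i"
proof (induction i)
  case (Suc i)
  have "(x + y) ^ 2 ^ Suc i = ((x + y) ^ 2 ^ i) ^ 2"
    by (simp add: power_mult[symmetric] mult.commute)
  also have "\<dots> = (x ^ 2 ^ i) ^ 2 + (y ^ 2 ^ i) ^ 2"
    using Suc assms by (simp add: power2_sum)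
  also have "\<dots> = x ^ 2 ^ Suc i + y ^ 2 ^ Suc i"
    by (simp add: power_mult[symmetric] mult.commute)
  finally show ?case .
qed simp

lemma frobenius_sum:
  assumes "(1::'a::field) + 1 = 0" and "finite A"
  shows "(\<Sum>j\<in>A. g j) ^ 2 ^ i = (\<Sum>j\<in>A. (g j :: 'a) ^ 2 ^ i)"
  using assms(2) by (induction A rule: finite_induct) (simp_all add: frobenius_add[OF assms(1)])

lemma Tr_add:
  assumes "(1::'a::field) + 1 = 0"
  shows "Tr m (x + y) = Tr m x + Tr m (y::'a)"
  unfolding Tr_def by (simp add: frobenius_add[OF assms] sum.distrib)

lemma Tr_zero: "Tr m (0::'a::field) = 0"
  unfolding Tr_def by (simp add: zero_power)

lemma Tr_square:
  assumes "(1::'a::field) + 1 = 0"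
  shows "Tr m (x ^ 2) = (Tr m (x::'a)) ^ 2"
  using frobenius_sum[OF assms, of "{..<m}" "\<lambda>i. x ^ 2 ^ i" 1]
  by (simp add: Tr_def power_mult[symmetric] mult.commute)

lemma sum_lessThan_add: "(\<Sum>i<a + b. g i) = (\<Sum>i<a. g i) + (\<Sum>i<b. g (a + i))"
  for g :: "nat \<Rightarrow> 'b::comm_monoid_add"
  by (induction b) (simp_all add: add.assoc)

section \<open>Finite fields and Walsh transforms\<close>

lemma power_card_eq_self:
  fixes x :: "'a::{field,finite}"
  shows "x ^ CARD('a) = x"
proof (cases "x = 0")
  case False
  define A where "A = (UNIV::'a set) - {0}"
  have "bij_betw (\<lambda>y. x * y) A A"
    by (rule bij_betw_byWitness[where f'="\<lambda>y. y / x"]) (use False in \<open>auto simp: A_def\<close>)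
  then have "(\<Prod>y\<in>A. y) = (\<Prod>y\<in>A. x * y)"
    using prod.reindex_bij_betw[of "\<lambda>y. x * y" A A "\<lambda>y. y"] by simp
  also have "\<dots> = x ^ card A * (\<Prod>y\<in>A. y)"
    by (simp add: prod.distrib)
  finally have "x ^ card A = 1"
    by (simp add: A_def)
  moreover have "CARD('a) = Suc (card A)"
    by (simp add: A_def card_Diff_singleton)
  ultimately show ?thesis
    by simp
qed simp

lemma poly_nonzero_somewhere:
  fixes p :: "'a::idom poly"
  assumes "p \<noteq> 0" and "finite A" and "degree p < card A"
  shows "\<exists>x\<in>A. poly p x \<noteq> 0"
proof (rule ccontr)
  assume "\<not> (\<exists>x\<in>A. poly p x \<noteq> 0)"
  then have "card A \<le> card {x. poly p x = 0}"
    using poly_roots_finite[OF assms(1)] by (intro card_mono) auto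
  then show False
    using card_poly_roots_bound[OF assms(1)] assms(3) by linarith
qed

lemma walsh_mult_var:
  fixes w :: "'a::{field,finite}"
  assumes "w \<noteq> 0"
  shows "walsh n (\<lambda>x. g (w * x)) a = walsh n g (a / w)"
proof -
  have "bij (\<lambda>x. w * x)"
    by (rule bij_betw_byWitness[where f'="\<lambda>y. y / w"]) (use assms in auto)
  then show ?thesis
    unfolding walsh_def
    using sum.reindex_bij_betw[of "\<lambda>x. w * x" UNIV UNIV "\<lambda>y. if g y = trb n (a / w * y) then 1 else -1"]
    using assms by simp
qed

definition neg_one_pow :: "bool \<Rightarrow> int" where
  "neg_one_pow b = (if b then -1 else 1)"

lemma neg_one_pow_xor: "neg_one_pow (a \<noteq> b) = neg_one_pow a * neg_one_pow b"
  by (simp add: neg_one_pow_def)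

lemma walsh_eq_sum_neg_one_pow:
  "walsh n f a = (\<Sum>x\<in>UNIV. neg_one_pow (f x \<noteq> trb n (a * x)))"
  unfolding walsh_def neg_one_pow_def by (intro sum.cong) auto

lemma plateaued_if_bent:
  assumes "n = 2 * k" and "\<forall>a. walsh n f a \<in> {2 ^ k, - (2 ^ k)}"
  shows "plateaued n f"
  unfolding plateaued_def using assms by (intro exI[of _ k]) auto

lemma eval_rpoly_cong:
  assumes "\<forall>S\<in>P. \<forall>j\<in>S. X j = Y j"
  shows "eval_rpoly P X = eval_rpoly P Y"
proof -
  have "{S\<in>P. \<forall>j\<in>S. X j} = {S\<in>P. \<forall>j\<in>S. Y j}"
    using assms by blast
  then show ?thesis
    by (simp add: eval_rpoly_def)
qed

lemma vdot_cong:
  assumes "\<forall>i<t. fs i x = gs i y"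
  shows "vdot t v fs x = vdot t v gs y"
proof -
  have "{i. i < t \<and> v i \<and> fs i x} = {i. i < t \<and> v i \<and> gs i y}"
    using assms by blast
  then show ?thesis
    by (simp add: vdot_def)
qed

section \<open>Quadratic extensions of characteristic 2\<close>

locale char2_quadratic_field =
  fixes n k :: nat and field_type :: "'a::{field,finite} itself"
  assumes char2: "(1::'a) + 1 = 0"
    and card: "CARD('a) = 2 ^ n"
    and n_eq: "n = 2 * k"
begin

abbreviation K :: "'a set" where
  "K \<equiv> subfield k"

lemma add_self: "(x::'a) + x = 0"
  using char2_add_self[OF char2] .

lemma add_self_left: "(x::'a) + (x + y) = y"
  by (simp add: add.assoc[symmetric] add_self)

lemma add_eq_0_iff_eq: "(x::'a) + y = 0 \<longleftrightarrow> x = y"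
  by (metis add_diff_cancel_right' add_self char2_uminus[OF char2] diff_conv_add_uminus)

lemma k_pos: "0 < k"
proof -
  have "card {0::'a, 1} \<le> CARD('a)"
    by (rule card_mono) auto
  then show ?thesis
    using card n_eq by (cases k) auto
qed

lemma frobenius_k_involutive: "((x::'a) ^ 2 ^ k) ^ 2 ^ k = x"
  using power_card_eq_self[of x] card n_eq by (simp add: power_mult[symmetric] power_add[symmetric] mult_2)

lemma mem_K_iff: "x \<in> K \<longleftrightarrow> x ^ 2 ^ k = x"
  by (simp add: subfield_def)

lemma zero_in_K: "0 \<in> K" and one_in_K: "1 \<in> K"
  by (simp_all add: mem_K_iff)

lemma K_add: "x \<in> K \<Longrightarrow> y \<in> K \<Longrightarrow> x + y \<in> K"
  and K_mult: "x \<in> K \<Longrightarrow> y \<in> K \<Longrightarrow> x * y \<in> K"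
  and K_divide: "x \<in> K \<Longrightarrow> y \<in> K \<Longrightarrow> x / y \<in> K"
  by (simp_all add: mem_K_iff frobenius_add[OF char2] power_mult_distrib power_divide)

lemma K_power:
  assumes "x \<in> K"
  shows "x ^ m \<in> K"
proof -
  have "(x ^ m) ^ 2 ^ k = (x ^ 2 ^ k) ^ m"
    by (simp only: power_mult[symmetric] mult.commute)
  then show ?thesis
    using assms by (simp add: mem_K_iff)
qed

lemma sqrt_in_K:
  assumes "u \<in> K"
  obtains r where "r \<in> K" and "r ^ 2 = u"
proof
  show "u ^ 2 ^ (k - 1) \<in> K"
    using assms by (rule K_power)
  have "(u ^ 2 ^ (k - 1)) ^ 2 = u ^ 2 ^ k"
    using k_pos by (simp add: power_mult[symmetric] power_Suc2[symmetric])
  then show "(u ^ 2 ^ (k - 1)) ^ 2 = u"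
    using assms by (simp add: mem_K_iff)
qed

definition Norm_rel :: "'a \<Rightarrow> 'a" where
  "Norm_rel x = x ^ (2 ^ k + 1)"

lemma Norm_rel_in_K: "Norm_rel x \<in> K"
  by (simp add: Norm_rel_def mem_K_iff power_mult_distrib frobenius_k_involutive mult.commute)

lemma Norm_rel_mult: "Norm_rel (x * y) = Norm_rel x * Norm_rel y"
  by (simp add: Norm_rel_def power_mult_distrib)

lemma Norm_rel_eq_0_iff: "Norm_rel x = 0 \<longleftrightarrow> x = 0"
  by (simp add: Norm_rel_def)

definition Tr_rel :: "'a \<Rightarrow> 'a" where
  "Tr_rel x = x + x ^ 2 ^ k"

lemma Tr_rel_in_K: "Tr_rel x \<in> K"
  by (simp add: mem_K_iff Tr_rel_def frobenius_add[OF char2] frobenius_k_involutive add.commute)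

lemma Tr_rel_add: "Tr_rel (x + y) = Tr_rel x + Tr_rel y"
  by (simp add: Tr_rel_def frobenius_add[OF char2] algebra_simps)

lemma Tr_rel_K_linear: "c \<in> K \<Longrightarrow> Tr_rel (c * x) = c * Tr_rel x"
  by (simp add: Tr_rel_def mem_K_iff power_mult_distrib distrib_left)

lemma Tr_rel_eq_0_iff: "Tr_rel x = 0 \<longleftrightarrow> x \<in> K"
  by (auto simp: Tr_rel_def mem_K_iff add_eq_0_iff_eq)

lemma Tr_transitive: "Tr n x = Tr k (Tr_rel x)"
proof -
  have "Tr n x = (\<Sum>i<k. x ^ 2 ^ i) + (\<Sum>i<k. x ^ 2 ^ (k + i))"
    unfolding Tr_def n_eq mult_2 by (rule sum_lessThan_add)
  also have "\<dots> = Tr k x + Tr k (x ^ 2 ^ k)"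
    by (simp add: Tr_def power_mult[symmetric] power_add)
  finally show ?thesis
    by (simp add: Tr_rel_def Tr_add[OF char2])
qed

lemma trb_transitive: "trb n x = trb k (Tr_rel x)"
  by (simp add: trb_def Tr_transitive)

lemma Tr_rel_surj: "\<exists>\<zeta>. Tr_rel \<zeta> = 1"
proof -
  define p :: "'a poly" where "p = monom 1 (2 ^ k) + monom 1 1"
  have "(1::nat) < 2 ^ k"
    using one_less_power[of "2::nat" k] k_pos by simp
  then have "coeff p (2 ^ k) = 1" and "degree p \<le> 2 ^ k"
    by (auto simp: p_def coeff_monom intro!: degree_add_le degree_monom_le order.trans[OF degree_monom_le])
  moreover have "(2::nat) ^ k < CARD('a)"
    using card n_eq k_pos by simp
  ultimately obtain z where "poly p z \<noteq> 0"
    using poly_nonzero_somewhere[of p UNIV] by fastforce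
  then have z: "Tr_rel z \<noteq> 0"
    by (simp add: p_def poly_monom Tr_rel_def add.commute)
  have "Tr_rel (z / Tr_rel z) = 1"
    using Tr_rel_K_linear[OF K_divide[OF one_in_K Tr_rel_in_K], of z z] z by simp
  then show ?thesis ..
qed

lemma Tr_rel_decomp:
  assumes "Tr_rel \<zeta> = 1" and "s \<in> K" and "z \<in> K"
  shows "Tr_rel (s * \<zeta> + z) = s"
  using assms by (simp add: Tr_rel_add Tr_rel_K_linear Tr_rel_eq_0_iff)

lemma K_times_K_bij:
  assumes \<zeta>: "Tr_rel \<zeta> = 1"
  shows "bij_betw (\<lambda>(s, z). s * \<zeta> + z) (K \<times> K) UNIV"
proof (rule bij_betw_byWitness[where f'="\<lambda>y. (Tr_rel y, y + Tr_rel y * \<zeta>)"])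
  show "\<forall>p\<in>K \<times> K. (\<lambda>y. (Tr_rel y, y + Tr_rel y * \<zeta>)) ((\<lambda>(s, z). s * \<zeta> + z) p) = p"
    using Tr_rel_decomp[OF \<zeta>] by (auto simp: ac_simps add_self add_self_left)
  show "\<forall>y\<in>UNIV. (\<lambda>(s, z). s * \<zeta> + z) ((\<lambda>y. (Tr_rel y, y + Tr_rel y * \<zeta>)) y) = y"
    by (simp add: ac_simps add_self add_self_left)
  have "Tr_rel (y + Tr_rel y * \<zeta>) = 0" for y
    using \<zeta> by (simp add: Tr_rel_add Tr_rel_K_linear Tr_rel_in_K add_self)
  then show "(\<lambda>y. (Tr_rel y, y + Tr_rel y * \<zeta>)) ` UNIV \<subseteq> K \<times> K"
    using Tr_rel_in_K Tr_rel_eq_0_iff by blast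
qed simp

lemma card_K: "card K = 2 ^ k"
proof -
  obtain \<zeta> where "Tr_rel \<zeta> = 1"
    using Tr_rel_surj ..
  then have "card K * card K = 2 ^ k * 2 ^ k"
    using bij_betw_same_card[OF K_times_K_bij] card n_eq
    by (simp add: card_cartesian_product power_add[symmetric] mult_2)
  then have "card K ^ 2 = (2 ^ k) ^ 2"
    by (simp add: power2_eq_square)
  then show ?thesis
    by (rule power_eq_imp_eq_base) auto
qed

lemma Tr_K_square:
  assumes "y \<in> K"
  shows "Tr k (y ^ 2) = Tr k y"
proof -
  have "Tr k (y ^ 2) + y = (\<Sum>i<k. y ^ 2 ^ Suc i) + y"
    by (simp add: Tr_def power_mult[symmetric] mult.commute)
  also have "\<dots> = (\<Sum>i<Suc k. y ^ 2 ^ i)"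
    by (subst sum.lessThan_Suc_shift) (simp add: add.commute)
  also have "\<dots> = Tr k y + y"
    using assms by (simp add: Tr_def mem_K_iff)
  finally show ?thesis
    by simp
qed

lemma Tr_K_0_or_1:
  assumes "y \<in> K"
  shows "Tr k y = 0 \<or> Tr k y = 1"
proof -
  have "Tr k y * Tr k y = Tr k y"
    using Tr_K_square[OF assms] Tr_square[OF char2, of k y] by (simp add: power2_eq_square)
  then show ?thesis
    by (metis mult_cancel_right1 mult_zero_left)
qed

lemma trb_K_add:
  assumes "x \<in> K" and "y \<in> K"
  shows "trb k (x + y) = (trb k x \<noteq> trb k y)"
  using Tr_K_0_or_1[OF assms(1)] Tr_K_0_or_1[OF assms(2)] char2
  by (auto simp: trb_def Tr_add[OF char2])

lemma Tr_K_nontrivial: "\<exists>y\<in>K. trb k y"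
proof -
  define p :: "'a poly" where "p = (\<Sum>i<k. monom 1 (2 ^ i))"
  have "coeff p (2 ^ (k - 1)) = 1"
    using k_pos by (simp add: p_def coeff_sum coeff_monom sum.delta'[of _ "k - 1"] cong: if_cong)
  moreover have "degree p \<le> 2 ^ (k - 1)"
    unfolding p_def
    by (intro degree_sum_le order.trans[OF degree_monom_le]) (auto intro: power_increasing)
  moreover have "(2::nat) ^ (k - 1) < card K"
    using k_pos card_K by simp
  ultimately obtain y where "y \<in> K" and "poly p y \<noteq> 0"
    using poly_nonzero_somewhere[of p K] by fastforce
  then show ?thesis
    by (auto simp: p_def poly_sum poly_monom Tr_def trb_def)
qed

definition chi :: "'a \<Rightarrow> int" where
  "chi x = neg_one_pow (trb k x)"

lemma chi_add:
  assumes "x \<in> K" and "y \<in> K"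
  shows "chi (x + y) = chi x * chi y"
  unfolding chi_def trb_K_add[OF assms] by (rule neg_one_pow_xor)

lemma chi_square: "y \<in> K \<Longrightarrow> chi (y ^ 2) = chi y"
  by (simp add: chi_def trb_def Tr_K_square)

lemma sum_chi_mult:
  assumes c: "c \<in> K"
  shows "(\<Sum>z\<in>K. chi (z * c)) = (if c = 0 then 2 ^ k else 0)"
proof (cases "c = 0")
  case True
  then show ?thesis
    by (simp add: chi_def neg_one_pow_def trb_def Tr_zero card_K)
next
  case False
  obtain y0 where y0: "y0 \<in> K" "trb k y0"
    using Tr_K_nontrivial by blast
  define z0 where "z0 = y0 / c"
  have z0: "z0 \<in> K"
    unfolding z0_def using y0(1) c by (rule K_divide)
  have "bij_betw (\<lambda>z. z + z0) K K"
    by (rule bij_betw_byWitness[where f'="\<lambda>z. z + z0"]) (auto simp: add.assoc add_self K_add z0)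
  then have "(\<Sum>z\<in>K. chi (z * c)) = (\<Sum>z\<in>K. chi ((z + z0) * c))"
    using sum.reindex_bij_betw[of "\<lambda>z. z + z0" K K "\<lambda>z. chi (z * c)"] by simp
  also have "\<dots> = (\<Sum>z\<in>K. chi (z * c) * chi y0)"
    using False y0(1) c by (intro sum.cong refl) (simp add: z0_def distrib_right chi_add K_mult)
  also have "\<dots> = - (\<Sum>z\<in>K. chi (z * c))"
    using y0(2) by (simp add: chi_def neg_one_pow_def sum_negf)
  finally show ?thesis
    using False by simp
qed

lemma Norm_rel_decomp:
  assumes \<zeta>: "Tr_rel \<zeta> = 1" and "s \<in> K" and "z \<in> K"
  shows "Norm_rel (s * \<zeta> + z) = s ^ 2 * Norm_rel \<zeta> + s * z + z ^ 2"
proof -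
  have "Norm_rel (s * \<zeta> + z) = (s * \<zeta> ^ 2 ^ k + z) * (s * \<zeta> + z)"
    using assms(2,3) by (simp add: Norm_rel_def frobenius_add[OF char2] power_mult_distrib mem_K_iff)
  also have "\<dots> = s ^ 2 * Norm_rel \<zeta> + s * z * (\<zeta> + \<zeta> ^ 2 ^ k) + z ^ 2"
    by (simp add: Norm_rel_def algebra_simps power2_eq_square)
  finally show ?thesis
    using \<zeta> by (simp add: Tr_rel_def)
qed

lemma chi_Norm_rel_decomp:
  assumes \<zeta>: "Tr_rel \<zeta> = 1" and K: "u \<in> K" "r \<in> K" "s \<in> K" "z \<in> K" and r: "r ^ 2 = u"
  shows "chi (u * Norm_rel (s * \<zeta> + z))
    = chi (u * s ^ 2 * Norm_rel \<zeta>) * chi (z * (u * s)) * chi (z * r)"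
proof -
  have "u * Norm_rel (s * \<zeta> + z) = u * s ^ 2 * Norm_rel \<zeta> + z * (u * s) + (z * r) ^ 2"
    using Norm_rel_decomp[OF \<zeta> K(3,4)] r by (simp add: algebra_simps power2_eq_square)
  moreover have "u * s ^ 2 * Norm_rel \<zeta> \<in> K" "z * (u * s) \<in> K" "z * r \<in> K"
    using K by (simp_all add: K_mult K_power Norm_rel_in_K)
  ultimately show ?thesis
    by (simp add: chi_add chi_square K_add K_power)
qed

lemma chi_Tr_rel_decomp:
  assumes \<zeta>: "Tr_rel \<zeta> = 1" and K: "s \<in> K" "z \<in> K"
  shows "chi (Tr_rel (a * (s * \<zeta> + z))) = chi (s * Tr_rel (a * \<zeta>)) * chi (z * Tr_rel a)"
proof -
  have "Tr_rel (a * (s * \<zeta> + z)) = s * Tr_rel (a * \<zeta>) + z * Tr_rel a"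
    using K by (simp add: algebra_simps Tr_rel_add flip: Tr_rel_K_linear)
  then show ?thesis
    using K by (simp add: chi_add K_mult Tr_rel_in_K)
qed

lemma walsh_eq_sum_K_times_K:
  assumes \<zeta>: "Tr_rel \<zeta> = 1"
  shows "walsh n g a
    = (\<Sum>s\<in>K. \<Sum>z\<in>K. neg_one_pow (g (s * \<zeta> + z)) * chi (Tr_rel (a * (s * \<zeta> + z))))"
proof -
  have "walsh n g a = (\<Sum>y\<in>UNIV. neg_one_pow (g y) * chi (Tr_rel (a * y)))"
    by (simp only: walsh_eq_sum_neg_one_pow neg_one_pow_xor chi_def trb_transitive)
  also have "\<dots> = (\<Sum>(s, z)\<in>K \<times> K. neg_one_pow (g (s * \<zeta> + z)) * chi (Tr_rel (a * (s * \<zeta> + z))))"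
    using sum.reindex_bij_betw[OF K_times_K_bij[OF \<zeta>], of "\<lambda>y. neg_one_pow (g y) * chi (Tr_rel (a * y))"]
    by (simp add: case_prod_beta)
  finally show ?thesis
    by (simp add: sum.cartesian_product)
qed

lemma walsh_Norm_rel_plus_fun_of_Tr_rel:
  assumes uK: "u \<in> K" and u0: "u \<noteq> 0"
  shows "walsh n (\<lambda>x. trb k (u * Norm_rel x) \<noteq> \<Phi> (Tr_rel x)) a \<in> {2 ^ k, - (2 ^ k)}"
proof -
  obtain \<zeta> where \<zeta>: "Tr_rel \<zeta> = 1"
    using Tr_rel_surj ..
  obtain r where r: "r \<in> K" "r ^ 2 = u"
    using sqrt_in_K[OF uK] .
  define B where "B s = neg_one_pow (\<Phi> s) * chi (u * s ^ 2 * Norm_rel \<zeta>) * chi (s * Tr_rel (a * \<zeta>))"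
    for s
  define c where "c s = u * s + r + Tr_rel a" for s
  define s0 where "s0 = (r + Tr_rel a) / u"
  define G where "G = (\<lambda>x. trb k (u * Norm_rel x) \<noteq> \<Phi> (Tr_rel x))"
  have summand: "neg_one_pow (G (s * \<zeta> + z)) * chi (Tr_rel (a * (s * \<zeta> + z))) = B s * chi (z * c s)"
    if s: "s \<in> K" and z: "z \<in> K" for s z
  proof -
    have "chi (z * c s) = chi (z * (u * s)) * chi (z * r) * chi (z * Tr_rel a)"
      using s z uK r(1) Tr_rel_in_K by (simp add: c_def distrib_left chi_add K_add K_mult)
    then show ?thesis
      unfolding G_def neg_one_pow_xor Tr_rel_decomp[OF \<zeta> s z] chi_def[symmetric]
        chi_Norm_rel_decomp[OF \<zeta> uK r(1) s z r(2)] chi_Tr_rel_decomp[OF \<zeta> s z]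
      by (simp add: B_def mult_ac)
  qed
  have c_eq_0_iff: "c s = 0 \<longleftrightarrow> s = s0" for s
    using u0 by (simp add: c_def s0_def add.assoc add_eq_0_iff_eq eq_divide_eq mult.commute)
  have c_in_K: "c s \<in> K" if "s \<in> K" for s
    using that uK r(1) Tr_rel_in_K by (simp add: c_def K_add K_mult)
  have "walsh n G a = (\<Sum>s\<in>K. B s * (\<Sum>z\<in>K. chi (z * c s)))"
    by (simp add: walsh_eq_sum_K_times_K[OF \<zeta>] summand sum_distrib_left cong: sum.cong)
  also have "\<dots> = (\<Sum>s\<in>K. if s = s0 then B s * 2 ^ k else 0)"
    by (intro sum.cong refl) (simp add: sum_chi_mult c_in_K c_eq_0_iff)
  also have "\<dots> = B s0 * 2 ^ k"
    using uK r(1) Tr_rel_in_K by (simp add: s0_def K_add K_divide)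
  finally show ?thesis
    by (auto simp: G_def B_def chi_def neg_one_pow_def)
qed

lemma walsh_Norm_rel_plus_fun_of_Tr_rel_mult:
  assumes "u \<in> K" and "u \<noteq> 0" and w: "w \<noteq> 0"
  shows "walsh n (\<lambda>x. trb k (u * Norm_rel x) \<noteq> \<Phi> (Tr_rel (w * x))) a \<in> {2 ^ k, - (2 ^ k)}"
proof -
  define u' where "u' = u / Norm_rel w"
  have "u' \<in> K" and "u' \<noteq> 0"
    using assms by (simp_all add: u'_def K_divide Norm_rel_in_K Norm_rel_eq_0_iff)
  define G where "G = (\<lambda>y. trb k (u' * Norm_rel y) \<noteq> \<Phi> (Tr_rel y))"
  have "(\<lambda>x. trb k (u * Norm_rel x) \<noteq> \<Phi> (Tr_rel (w * x))) = (\<lambda>x. G (w * x))"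
    using w by (simp add: G_def u'_def Norm_rel_mult Norm_rel_eq_0_iff)
  then have "walsh n (\<lambda>x. trb k (u * Norm_rel x) \<noteq> \<Phi> (Tr_rel (w * x))) a = walsh n G (a / w)"
    using walsh_mult_var[OF w] by simp
  with walsh_Norm_rel_plus_fun_of_Tr_rel[OF \<open>u' \<in> K\<close> \<open>u' \<noteq> 0\<close>] show ?thesis
    by (simp add: G_def)
qed

lemma K_multiples_of_common_element:
  fixes u :: "nat \<Rightarrow> 'a"
  assumes "\<forall>i j. i < j \<and> j < m \<longrightarrow> u i * u j ^ 2 ^ k \<in> K \<and> u i * u j ^ 2 ^ k \<noteq> 0"
  obtains w c where "w \<noteq> 0" and "\<forall>j<m. c j \<in> K \<and> u j = c j * w"
proof (cases "u 0 = 0")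
  case True
  then have "\<forall>j<m. j = 0"
    using assms by (metis mult_zero_left neq0_conv)
  then have "\<forall>j<m. u j \<in> K \<and> u j = u j * 1"
    using True zero_in_K by auto
  then show ?thesis
    using that[of 1 u] by simp
next
  case False
  have "u j / u 0 \<in> K" if "j < m" for j
  proof (cases "j = 0")
    case True
    then show ?thesis
      using False one_in_K by simp
  next
    case j: False
    define p where "p = u 0 * u j ^ 2 ^ k"
    have "p \<in> K"
      using assms that j unfolding p_def by blast
    moreover have "p ^ 2 ^ k = u 0 ^ 2 ^ k * u j"
      by (simp add: p_def power_mult_distrib frobenius_k_involutive)
    ultimately have "u j / u 0 = p / Norm_rel (u 0)"
      using False by (simp add: Norm_rel_def mem_K_iff field_simps)
    then show ?thesis
      using \<open>p \<in> K\<close> Norm_rel_in_K by (simp add: K_divide)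
  qed
  then show ?thesis
    using that[of "u 0" "\<lambda>j. u j / u 0"] False by simp
qed

lemma trb_K_multiple:
  assumes "c \<in> K"
  shows "trb n (c * w * x) = trb k (c * Tr_rel (w * x))"
  using assms by (simp add: trb_transitive mult.assoc Tr_rel_K_linear)

end

theorem corollary5:
  fixes n k t :: nat and u :: "nat \<Rightarrow> 'a::{field,finite}" and F :: "nat \<Rightarrow> nat set set"
    and f :: "nat \<Rightarrow> 'a \<Rightarrow> bool"
  assumes char2: "(1::'a) + 1 = 0"
    and card: "CARD('a) = 2 ^ n"
    and nk: "n = 2 * k"
    and distinct: "inj_on u {..<k}"
    and prod: "\<forall>i j. i < j \<and> j < k \<longrightarrow>
                  u i * u j ^ (2 ^ k) \<in> subfield k \<and> u i * u j ^ (2 ^ k) \<noteq> 0"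
    and tpos: "0 < t"
    and red: "\<forall>i<t. reduced_poly k (F i)"
    and fdef: "\<forall>i x. f i x = eval_rpoly (F i) (\<lambda>j. trb n (u j * x))"
  shows "H_vplateaued n k t f \<longleftrightarrow> vplateaued n t f"
proof -
  interpret char2_quadratic_field n k "TYPE('a)"
    by unfold_locales (fact char2 card nk)+
  obtain w c where w: "w \<noteq> 0" and c: "\<forall>j<k. c j \<in> K \<and> u j = c j * w"
    using K_multiples_of_common_element[OF prod] by blast
  define g where "g i s = eval_rpoly (F i) (\<lambda>j. trb k (c j * s))" for i s
  have "f i x = g i (Tr_rel (w * x))" if "i < t" for i x
    unfolding fdef[rule_format] g_def
    by (rule eval_rpoly_cong) (use red that c trb_K_multiple in \<open>fastforce simp: reduced_poly_def\<close>)
  then have "vdot t v f x = vdot t v g (Tr_rel (w * x))" for v x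
    by (simp add: vdot_cong)
  then have "H_component k t f u' v = (\<lambda>x. trb k (u' * Norm_rel x) \<noteq> vdot t v g (Tr_rel (w * x)))"
    for u' v
    by (simp add: fun_eq_iff H_component_def Norm_rel_def)
  then have "plateaued n (H_component k t f u' v)" if "u' \<in> K" and "u' \<noteq> 0" for u' v
    by (simp only:) (intro plateaued_if_bent[OF nk] allI walsh_Norm_rel_plus_fun_of_Tr_rel_mult[OF that w])
  moreover have "H_component k t f 0 v = vdot t v f" for v
    by (simp add: H_component_def trb_def Tr_zero fun_eq_iff)
  ultimately show ?thesis
    unfolding H_vplateaued_def vplateaued_def using zero_in_K by metis
qed

end
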